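(* Consider the two-dimensional Grover walk on $\mathbb{Z}^2$ with a four-level coin, whose real amplitudes $\alpha_{x,y,c'}(t)$ ($x,y\in\mathbb{Z}$, $c'\in\{0,1,2,3\}$, $t\in\mathbb{Z}_{\ge 0}$) evolve by \[ \alpha_{x,y,0}(t+1)=\sum_{j=0}^3 G_{0j}\alpha_{x+1,y+1,j}(t),\quad \alpha_{x,y,1}(t+1)=\sum_{j=0}^3 G_{1j}\alpha_{x+1,y-1,j}(t), \] \[ \alpha_{x,y,2}(t+1)=\sum_{j=0}^3 G_{2j}\alpha_{x-1,y+1,j}(t),\quad \alpha_{x,y,3}(t+1)=\sum_{j=0}^3 G_{3j}\alpha_{x-1,y-1,j}(t), \] where $G=(G_{ij})_{i,j=0}^3=\frac12\begin{pmatrix}-1&1&1&1\\1&-1&1&1\\1&1&-1&1\\1&1&1&-1\end{pmatrix}$. Suppose the walker starts at the origin with initial amplitudes $\alpha_{0,0,0}(0)=1/2$, $\alpha_{0,0,1}(0)=-1/2$, $\alpha_{0,0,2}(0)=-1/2$, $\alpha_{0,0,3}(0)=1/2$, and $\alpha_{x,y,c'}(0)=0$ for $(x,y)\neq(0,0)$. Then for all $t\ge 0$ and all $(x,y)\in\mathbb{Z}^2$, \[ \alpha_{x-1,y,0}(t)+\alpha_{x-1,y,1}(t)+\alpha_{x+1,y,2}(t)+\alpha_{x+1,y,3}(t)=0, \] \[ \alpha_{x,y-1,0}(t)+\alpha_{x,y-1,2}(t)+\alpha_{x,y+1,1}(t)+\alpha_{x,y+1,3}(t)=0. \]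
   Context: The Grover walk state at time $t$ is $\sum_{x,y,c'}\alpha_{x,y,c'}(t)|x,y\rangle\otimes|c'\rangle$; one time step applies the Grover coin $G$ to the coin and then moves the walker according to the coin state: $|0\rangle$ left-down $(x-1,y-1)$, $|1\rangle$ left-up $(x-1,y+1)$, $|2\rangle$ right-down $(x+1,y-1)$, $|3\rangle$ right-up $(x+1,y+1)$; this is equivalent to the recursions stated. *)

theory Defs
  imports Complex_Main
begin

definition grover :: "nat \<Rightarrow> nat \<Rightarrow> real" where
  "grover i j = (if i = j then -1/2 else 1/2)"

definition grover_walk :: "(nat \<Rightarrow> int \<Rightarrow> int \<Rightarrow> nat \<Rightarrow> real) \<Rightarrow> bool" where
  "grover_walk a \<longleftrightarrow> (\<forall>t x y.
     a (Suc t) x y 0 = (\<Sum>j\<le>3. grover 0 j * a t (x+1) (y+1) j) \<and>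
     a (Suc t) x y 1 = (\<Sum>j\<le>3. grover 1 j * a t (x+1) (y-1) j) \<and>
     a (Suc t) x y 2 = (\<Sum>j\<le>3. grover 2 j * a t (x-1) (y+1) j) \<and>
     a (Suc t) x y 3 = (\<Sum>j\<le>3. grover 3 j * a t (x-1) (y-1) j))"

end

theory Submission
  imports Defs
begin

text \<open>One Grover step maps the sum of the four amplitudes flowing horizontally into the
  edges around (x, y) onto the sum of the four amplitudes flowing vertically one step earlier,
  and vice versa: in each case the diagonal entries -1/2 of the coin cancel against the
  off-diagonal ones. Hence both sums vanish forever as soon as they vanish initially, which
  for the given initial state is a direct check.\<close>

definition horizontal_sum :: "(nat \<Rightarrow> int \<Rightarrow> int \<Rightarrow> nat \<Rightarrow> real) \<Rightarrow> nat \<Rightarrow> int \<Rightarrow> int \<Rightarrow> real"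
  where "horizontal_sum a t x y = a t (x-1) y 0 + a t (x-1) y 1 + a t (x+1) y 2 + a t (x+1) y 3"

definition vertical_sum :: "(nat \<Rightarrow> int \<Rightarrow> int \<Rightarrow> nat \<Rightarrow> real) \<Rightarrow> nat \<Rightarrow> int \<Rightarrow> int \<Rightarrow> real"
  where "vertical_sum a t x y = a t x (y-1) 0 + a t x (y-1) 2 + a t x (y+1) 1 + a t x (y+1) 3"

lemma sum_atMost_3: "(\<Sum>j\<le>(3::nat). f j) = f 0 + f 1 + f 2 + (f 3 :: 'a :: comm_monoid_add)"
  by (simp add: numeral_3_eq_3 numeral_2_eq_2 atMost_Suc ac_simps)

lemma grover_walk_Suc:
  assumes "grover_walk a"
  shows "a (Suc t) x y 0 = (- a t (x+1) (y+1) 0 + a t (x+1) (y+1) 1 + a t (x+1) (y+1) 2 + a t (x+1) (y+1) 3) / 2"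
    and "a (Suc t) x y 1 = (a t (x+1) (y-1) 0 - a t (x+1) (y-1) 1 + a t (x+1) (y-1) 2 + a t (x+1) (y-1) 3) / 2"
    and "a (Suc t) x y 2 = (a t (x-1) (y+1) 0 + a t (x-1) (y+1) 1 - a t (x-1) (y+1) 2 + a t (x-1) (y+1) 3) / 2"
    and "a (Suc t) x y 3 = (a t (x-1) (y-1) 0 + a t (x-1) (y-1) 1 + a t (x-1) (y-1) 2 - a t (x-1) (y-1) 3) / 2"
  using assms[unfolded grover_walk_def, rule_format, of t x y]
  by (simp_all add: sum_atMost_3 grover_def field_simps)

lemma horizontal_sum_Suc:
  assumes "grover_walk a"
  shows "horizontal_sum a (Suc t) x y = vertical_sum a t x y"
  using grover_walk_Suc(1,2)[OF assms, of t "x-1" y] grover_walk_Suc(3,4)[OF assms, of t "x+1" y]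
  unfolding horizontal_sum_def vertical_sum_def by simp

lemma vertical_sum_Suc:
  assumes "grover_walk a"
  shows "vertical_sum a (Suc t) x y = horizontal_sum a t x y"
  using grover_walk_Suc(1,3)[OF assms, of t x "y-1"] grover_walk_Suc(2,4)[OF assms, of t x "y+1"]
  unfolding horizontal_sum_def vertical_sum_def by simp

lemma grover_walk_sums_vanish:
  assumes "grover_walk a"
    and "\<And>x y. horizontal_sum a 0 x y = 0" and "\<And>x y. vertical_sum a 0 x y = 0"
  shows "horizontal_sum a t x y = 0 \<and> vertical_sum a t x y = 0"
  using assms by (induction t arbitrary: x y) (simp_all add: horizontal_sum_Suc vertical_sum_Suc)

lemma localized_sums_vanish:
  assumes local: "\<And>x y c. (x, y) \<noteq> (0, 0) \<Longrightarrow> c \<le> 3 \<Longrightarrow> a 0 x y c = 0"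
  shows "a 0 0 0 0 + a 0 0 0 1 = 0 \<Longrightarrow> a 0 0 0 2 + a 0 0 0 3 = 0 \<Longrightarrow> horizontal_sum a 0 x y = 0"
    and "a 0 0 0 0 + a 0 0 0 2 = 0 \<Longrightarrow> a 0 0 0 1 + a 0 0 0 3 = 0 \<Longrightarrow> vertical_sum a 0 x y = 0"
proof -
  show "horizontal_sum a 0 x y = 0" if "a 0 0 0 0 + a 0 0 0 1 = 0" "a 0 0 0 2 + a 0 0 0 3 = 0"
    using that by (cases "x = 1"; cases "x = -1"; cases "y = 0") (simp_all add: horizontal_sum_def local)
  show "vertical_sum a 0 x y = 0" if "a 0 0 0 0 + a 0 0 0 2 = 0" "a 0 0 0 1 + a 0 0 0 3 = 0"
    using that by (cases "y = 1"; cases "y = -1"; cases "x = 0") (simp_all add: vertical_sum_def local)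
qed

theorem lemma1:
  fixes a :: "nat \<Rightarrow> int \<Rightarrow> int \<Rightarrow> nat \<Rightarrow> real"
  assumes walk: "grover_walk a"
    and init0: "a 0 0 0 0 = 1/2" and init1: "a 0 0 0 1 = -1/2"
    and init2: "a 0 0 0 2 = -1/2" and init3: "a 0 0 0 3 = 1/2"
    and init_else: "\<And>x y c. (x, y) \<noteq> (0, 0) \<Longrightarrow> c \<le> 3 \<Longrightarrow> a 0 x y c = 0"
  shows "\<forall>t x y.
           a t (x-1) y 0 + a t (x-1) y 1 + a t (x+1) y 2 + a t (x+1) y 3 = 0 \<and>
           a t x (y-1) 0 + a t x (y-1) 2 + a t x (y+1) 1 + a t x (y+1) 3 = 0"
proof (intro allI)
  fix t x y
  have "a 0 0 0 0 + a 0 0 0 1 = 0" "a 0 0 0 2 + a 0 0 0 3 = 0"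
    and "a 0 0 0 0 + a 0 0 0 2 = 0" "a 0 0 0 1 + a 0 0 0 3 = 0"
    unfolding init0 init1 init2 init3 by simp_all
  then have "horizontal_sum a 0 x y = 0" "vertical_sum a 0 x y = 0" for x y
    using localized_sums_vanish[of a, OF init_else] by blast+
  then show "a t (x-1) y 0 + a t (x-1) y 1 + a t (x+1) y 2 + a t (x+1) y 3 = 0 \<and>
             a t x (y-1) 0 + a t x (y-1) 2 + a t x (y+1) 1 + a t x (y+1) 3 = 0"
    using grover_walk_sums_vanish[OF walk] unfolding horizontal_sum_def vertical_sum_def by blast
qed

end
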